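(* Let $G$ be a cubic graph with $|V(G)|\ge 4$ and let $v\in V(G)$. If $G^v$ is a Klee-graph, then $G$ is a Klee-graph.
   Context: For a cubic graph $G$ and $v\in V(G)$ with neighbours $x_1,x_2,x_3$, $G^v$ denotes the cubic graph obtained by replacing $v$ by a triangle: delete $v$, add new vertices $v_1,v_2,v_3$, the edges $v_1v_2,v_2v_3,v_3v_1$, and the edges $v_ix_i$ for $i=1,2,3$. A graph is a Klee-graph if it is $K_4$, or it equals $H^w$ for some Klee-graph $H$ and some $w\in V(H)$. *)

theory Defs
  imports Main
begin

definition simple_graph :: "'a set \<Rightarrow> 'a set set \<Rightarrow> bool" where
  "simple_graph V E \<longleftrightarrow> finite V \<and>
     (\<forall>e\<in>E. \<exists>a b. a \<in> V \<and> b \<in> V \<and> a \<noteq> b \<and> e = {a, b})"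

definition nbrs :: "'a set set \<Rightarrow> 'a \<Rightarrow> 'a set" where
  "nbrs E v = {u. {u, v} \<in> E}"

definition cubic :: "'a set \<Rightarrow> 'a set set \<Rightarrow> bool" where
  "cubic V E \<longleftrightarrow> simple_graph V E \<and> (\<forall>v\<in>V. card (nbrs E v) = 3)"

definition graph_iso :: "'a set \<Rightarrow> 'a set set \<Rightarrow> 'b set \<Rightarrow> 'b set set \<Rightarrow> bool" where
  "graph_iso V E V' E' \<longleftrightarrow> (\<exists>f. bij_betw f V V' \<and>
     (\<forall>a\<in>V. \<forall>b\<in>V. {a, b} \<in> E \<longleftrightarrow> {f a, f b} \<in> E'))"

definition is_K4 :: "'a set \<Rightarrow> 'a set set \<Rightarrow> bool" where
  "is_K4 V E \<longleftrightarrow> card V = 4 \<and> E = {{a, b} | a b. a \<in> V \<and> b \<in> V \<and> a \<noteq> b}"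

text \<open>Replacing vertex w (with neighbours x1,x2,x3) by a triangle on the new vertices
  v1,v2,v3, with v_i joined to x_i.\<close>
definition tri_vertices :: "'a set \<Rightarrow> 'a \<Rightarrow> 'a \<Rightarrow> 'a \<Rightarrow> 'a \<Rightarrow> 'a set" where
  "tri_vertices V w v1 v2 v3 = (V - {w}) \<union> {v1, v2, v3}"

definition tri_edges :: "'a set set \<Rightarrow> 'a \<Rightarrow> 'a \<Rightarrow> 'a \<Rightarrow> 'a \<Rightarrow> 'a \<Rightarrow> 'a \<Rightarrow> 'a \<Rightarrow> 'a set set" where
  "tri_edges E w v1 v2 v3 x1 x2 x3 =
     {e \<in> E. w \<notin> e} \<union> {{v1, v2}, {v2, v3}, {v3, v1}, {v1, x1}, {v2, x2}, {v3, x3}}"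

definition tri_data :: "'a set \<Rightarrow> 'a set set \<Rightarrow> 'a \<Rightarrow> 'a \<Rightarrow> 'a \<Rightarrow> 'a \<Rightarrow> 'a \<Rightarrow> 'a \<Rightarrow> 'a \<Rightarrow> bool" where
  "tri_data V E w v1 v2 v3 x1 x2 x3 \<longleftrightarrow>
     w \<in> V \<and> nbrs E w = {x1, x2, x3} \<and> x1 \<noteq> x2 \<and> x2 \<noteq> x3 \<and> x1 \<noteq> x3 \<and>
     v1 \<noteq> v2 \<and> v2 \<noteq> v3 \<and> v1 \<noteq> v3 \<and>
     v1 \<notin> V - {w} \<and> v2 \<notin> V - {w} \<and> v3 \<notin> V - {w}"

text \<open>Klee graphs: K4, closed under triangle replacement (and, graphs being
  considered up to isomorphism, under isomorphism).\<close>
inductive klee :: "'a set \<Rightarrow> 'a set set \<Rightarrow> bool" where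
  K4: "is_K4 V E \<Longrightarrow> klee V E"
| step: "klee V E \<Longrightarrow> tri_data V E w v1 v2 v3 x1 x2 x3 \<Longrightarrow>
         klee (tri_vertices V w v1 v2 v3) (tri_edges E w v1 v2 v3 x1 x2 x3)"
| iso: "klee V E \<Longrightarrow> simple_graph V' E' \<Longrightarrow> graph_iso V E V' E' \<Longrightarrow> klee V' E'"

end

theory Submission
  imports Defs
begin

text \<open>\<open>G\<close> is recovered from \<open>G\<^sup>v\<close> by contracting the new triangle back to \<open>v\<close>. So it suffices to
  show, by induction on the derivation of a Klee graph \<open>K\<close>, that contracting any triangle \<open>T\<close> of
  \<open>K\<close> yields a Klee graph as long as at least four vertices remain. If \<open>K = H\<^sup>w\<close> and \<open>T\<close> is the
  triangle replacing \<open>w\<close>, the contraction is \<open>H\<close> itself. Otherwise \<open>T\<close> is a triangle of \<open>H\<close>.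
  Klee graphs other than \<open>K\<^sub>4\<close> are cubic and diamond-free, so either \<open>H = K\<^sub>4\<close> and \<open>K/T\<close> is a
  cubic graph on four vertices, i.e. \<open>K\<^sub>4\<close>, or \<open>H\<close> has at least six vertices; then \<open>H/T\<close> is a Klee
  graph by induction, and since contracting \<open>T\<close> commutes with expanding \<open>w\<close>, \<open>K/T = (H/T)\<^sup>w\<close> is
  one as well. Isomorphic copies are harmless because contractions of isomorphic graphs at
  corresponding vertex sets are isomorphic.\<close>

lemma simple_graph_edgeD: "simple_graph V E \<Longrightarrow> {a, b} \<in> E \<Longrightarrow> a \<in> V \<and> b \<in> V \<and> a \<noteq> b"
  unfolding simple_graph_def by (metis doubleton_eq_iff)

lemma simple_graph_finite: "simple_graph V E \<Longrightarrow> finite V"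
  by (simp add: simple_graph_def)

lemma mem_nbrs_iff: "u \<in> nbrs E w \<longleftrightarrow> {u, w} \<in> E"
  by (simp add: nbrs_def)

lemma mem_nbrs_iff': "u \<in> nbrs E w \<longleftrightarrow> {w, u} \<in> E"
  by (simp add: nbrs_def insert_commute)

lemma nbrs_subset: "simple_graph V E \<Longrightarrow> nbrs E u \<subseteq> V"
  by (auto simp: nbrs_def dest: simple_graph_edgeD)

lemma finite_nbrs: "simple_graph V E \<Longrightarrow> finite (nbrs E u)"
  by (rule finite_subset[OF nbrs_subset simple_graph_finite])

lemma singleton_not_edge: "simple_graph V E \<Longrightarrow> {a} \<notin> E"
  using simple_graph_edgeD[of V E a a] by auto

definition triangle :: "'a set set \<Rightarrow> 'a set \<Rightarrow> bool" where
  "triangle E T \<longleftrightarrow> card T = 3 \<and> (\<forall>a\<in>T. \<forall>b\<in>T. a \<noteq> b \<longrightarrow> {a, b} \<in> E)"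

definition diamond_free :: "'a set set \<Rightarrow> bool" where
  "diamond_free E \<longleftrightarrow> (\<forall>a b c d. {a, b} \<in> E \<longrightarrow> {a, c} \<in> E \<longrightarrow> {b, c} \<in> E \<longrightarrow>
     {a, d} \<in> E \<longrightarrow> {b, d} \<in> E \<longrightarrow> c = d)"

lemma diamond_freeD:
  "diamond_free E \<Longrightarrow> {a, b} \<in> E \<Longrightarrow> {a, c} \<in> E \<Longrightarrow> {b, c} \<in> E \<Longrightarrow> {a, d} \<in> E \<Longrightarrow> {b, d} \<in> E
    \<Longrightarrow> c = d"
  unfolding diamond_free_def by blast

lemma triangle_adj: "triangle E T \<Longrightarrow> a \<in> T \<Longrightarrow> b \<in> T \<Longrightarrow> a \<noteq> b \<Longrightarrow> {a, b} \<in> E"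
  unfolding triangle_def by blast

lemma triangle_third:
  assumes "triangle E T" "a \<in> T" "b \<in> T" "a \<noteq> b"
  obtains c where "T = {a, b, c}" "c \<noteq> a" "c \<noteq> b"
proof -
  have "finite T" using assms(1) unfolding triangle_def by (metis card.infinite zero_neq_numeral)
  then have "card (T - {a, b}) = 1" using assms unfolding triangle_def by (simp add: card_Diff_subset)
  then obtain c where c: "T - {a, b} = {c}" by (rule card_1_singletonE)
  then have "T = {a, b, c}" using assms(2,3) by auto
  with c show ?thesis using that by auto
qed

lemma triangle_subset: assumes "simple_graph V E" "triangle E T" shows "T \<subseteq> V"
proof -
  obtain x y z where T: "T = {x, y, z}" "x \<noteq> y" "y \<noteq> z" "x \<noteq> z"
    using assms(2) card_3_iff unfolding triangle_def by metis
  then have "{x, y} \<in> E" "{y, z} \<in> E" using triangle_adj[OF assms(2)] by auto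
  then show ?thesis using T simple_graph_edgeD[OF assms(1)] by blast
qed

lemma diamond_free_triangle_unique_nbr:
  assumes "diamond_free E" "triangle E T" "t \<in> T" "t' \<in> T" "d \<notin> T" "{t, d} \<in> E" "{t', d} \<in> E"
  shows "t = t'"
proof (rule ccontr)
  assume "t \<noteq> t'"
  then obtain s where s: "T = {t, t', s}" "s \<noteq> t" "s \<noteq> t'" using triangle_third assms(2-4) by metis
  have "{t, t'} \<in> E" "{t, s} \<in> E" "{t', s} \<in> E"
    using triangle_adj[OF assms(2)] s \<open>t \<noteq> t'\<close> by auto
  then have "s = d" using diamond_freeD[OF assms(1)] assms(6,7) by blast
  then show False using s assms(5) by auto
qed

lemma graph_iso_sym: assumes "graph_iso V E V' E'" shows "graph_iso V' E' V E"
proof -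
  obtain f where f: "bij_betw f V V'" "\<forall>a\<in>V. \<forall>b\<in>V. {a, b} \<in> E \<longleftrightarrow> {f a, f b} \<in> E'"
    using assms unfolding graph_iso_def by blast
  let ?g = "inv_into V f"
  have g: "bij_betw ?g V' V" using f(1) by (rule bij_betw_inv_into)
  have "{a, b} \<in> E' \<longleftrightarrow> {?g a, ?g b} \<in> E" if "a \<in> V'" "b \<in> V'" for a b
  proof -
    have "?g a \<in> V" "f (?g a) = a" "?g b \<in> V" "f (?g b) = b"
      using that f(1) g bij_betw_apply bij_betw_inv_into_right by fastforce+
    then show ?thesis using f(2) by metis
  qed
  then show ?thesis using g unfolding graph_iso_def by blast
qed

lemma graph_iso_card: "graph_iso V E V' E' \<Longrightarrow> card V = card V'"
  unfolding graph_iso_def using bij_betw_same_card by blast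

lemma nbrs_graph_iso:
  assumes "simple_graph V E" "simple_graph V' E'" "bij_betw f V V'"
    "\<forall>a\<in>V. \<forall>b\<in>V. {a, b} \<in> E \<longleftrightarrow> {f a, f b} \<in> E'" "u \<in> V"
  shows "nbrs E' (f u) = f ` nbrs E u"
proof (rule set_eqI)
  fix y
  show "y \<in> nbrs E' (f u) \<longleftrightarrow> y \<in> f ` nbrs E u"
  proof
    assume "y \<in> nbrs E' (f u)"
    then have y: "{y, f u} \<in> E'" by (simp add: mem_nbrs_iff)
    then have "y \<in> V'" using simple_graph_edgeD[OF assms(2)] by blast
    then obtain x where x: "x \<in> V" "y = f x" using assms(3) bij_betw_imp_surj_on by blast
    then have "{x, u} \<in> E" using assms(4,5) y by blast
    then show "y \<in> f ` nbrs E u" using x by (simp add: mem_nbrs_iff)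
  next
    assume "y \<in> f ` nbrs E u"
    then obtain x where x: "{x, u} \<in> E" "y = f x" by (auto simp: mem_nbrs_iff)
    then have "x \<in> V" using simple_graph_edgeD[OF assms(1)] by blast
    then show "y \<in> nbrs E' (f u)" using x assms(4,5) by (simp add: mem_nbrs_iff)
  qed
qed

lemma cubic_graph_iso:
  assumes "cubic V E" "simple_graph V' E'" "graph_iso V E V' E'" shows "cubic V' E'"
proof -
  obtain f where f: "bij_betw f V V'" "\<forall>a\<in>V. \<forall>b\<in>V. {a, b} \<in> E \<longleftrightarrow> {f a, f b} \<in> E'"
    using assms(3) unfolding graph_iso_def by blast
  have sg: "simple_graph V E" using assms(1) by (simp add: cubic_def)
  have "card (nbrs E' (f u)) = 3" if "u \<in> V" for u
  proof -
    have "inj_on f (nbrs E u)"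
      using nbrs_subset[OF sg] f(1) bij_betw_imp_inj_on inj_on_subset by blast
    then show ?thesis
      using nbrs_graph_iso[OF sg assms(2) f that] assms(1) that by (simp add: card_image cubic_def)
  qed
  then show ?thesis using assms(2) f(1) bij_betw_imp_surj_on unfolding cubic_def by blast
qed

lemma diamond_free_graph_iso:
  assumes "diamond_free E" "simple_graph V' E'" "graph_iso V E V' E'" shows "diamond_free E'"
proof -
  obtain g where g: "bij_betw g V' V" "\<forall>a\<in>V'. \<forall>b\<in>V'. {a, b} \<in> E' \<longleftrightarrow> {g a, g b} \<in> E"
    using graph_iso_sym[OF assms(3)] unfolding graph_iso_def by blast
  show ?thesis unfolding diamond_free_def
  proof (intro allI impI)
    fix a b c d
    assume h: "{a, b} \<in> E'" "{a, c} \<in> E'" "{b, c} \<in> E'" "{a, d} \<in> E'" "{b, d} \<in> E'"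
    then have V: "a \<in> V'" "b \<in> V'" "c \<in> V'" "d \<in> V'" using simple_graph_edgeD[OF assms(2)] by blast+
    have "{g a, g b} \<in> E" "{g a, g c} \<in> E" "{g b, g c} \<in> E" "{g a, g d} \<in> E" "{g b, g d} \<in> E"
      using g(2) V h by blast+
    then have "g c = g d" by (rule diamond_freeD[OF assms(1)])
    then show "c = d" using V g(1) bij_betw_imp_inj_on by (metis inj_on_eq_iff)
  qed
qed

lemma triangle_graph_iso:
  assumes g: "bij_betw g V2 V" and adj: "\<forall>a\<in>V2. \<forall>b\<in>V2. {a, b} \<in> E2 \<longleftrightarrow> {g a, g b} \<in> E"
    and T: "T \<subseteq> V2" "triangle E2 T"
  shows "triangle E (g ` T)"
proof -
  have inj: "inj_on g T" using bij_betw_imp_inj_on[OF g] T(1) inj_on_subset by blast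
  then have "card (g ` T) = 3" using T(2) by (simp add: card_image triangle_def)
  moreover have "{g a, g b} \<in> E" if "a \<in> T" "b \<in> T" "g a \<noteq> g b" for a b
    using that adj T triangle_adj[OF T(2)] by blast
  ultimately show ?thesis unfolding triangle_def by blast
qed

lemma K4_cubic: assumes "is_K4 V E" shows "cubic V E"
proof -
  have c: "card V = 4" and E: "E = {{a, b} | a b. a \<in> V \<and> b \<in> V \<and> a \<noteq> b}"
    using assms by (auto simp: is_K4_def)
  have fin: "finite V" using c by (metis card.infinite zero_neq_numeral)
  have sg: "simple_graph V E" unfolding simple_graph_def E using fin by blast
  have "nbrs E u = V - {u}" if "u \<in> V" for u
    using that unfolding nbrs_def E by (auto simp: doubleton_eq_iff)
  then have "card (nbrs E u) = 3" if "u \<in> V" for u using that c fin by simp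
  then show ?thesis using sg unfolding cubic_def by blast
qed

lemma cubic_card_4_is_K4: assumes "cubic V E" "card V = 4" shows "is_K4 V E"
proof -
  have sg: "simple_graph V E" using assms(1) by (simp add: cubic_def)
  have fin: "finite V" using sg by (simp add: simple_graph_def)
  have nb: "nbrs E u = V - {u}" if u: "u \<in> V" for u
  proof -
    have "nbrs E u \<subseteq> V - {u}"
    proof
      fix x assume "x \<in> nbrs E u"
      then show "x \<in> V - {u}" using simple_graph_edgeD[OF sg, of x u] by (simp add: mem_nbrs_iff)
    qed
    moreover have "card (nbrs E u) = card (V - {u})" using assms u fin unfolding cubic_def by simp
    ultimately show ?thesis using fin by (simp add: card_subset_eq)
  qed
  have "E = {{a, b} | a b. a \<in> V \<and> b \<in> V \<and> a \<noteq> b}"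
  proof (intro set_eqI iffI)
    fix e assume "e \<in> E" then show "e \<in> {{a, b} | a b. a \<in> V \<and> b \<in> V \<and> a \<noteq> b}"
      using sg unfolding simple_graph_def by blast
  next
    fix e assume "e \<in> {{a, b} | a b. a \<in> V \<and> b \<in> V \<and> a \<noteq> b}"
    then obtain a b where ab: "a \<in> V" "b \<in> V" "a \<noteq> b" "e = {a, b}" by blast
    then have "a \<in> nbrs E b" using nb[OF ab(2)] by simp
    then show "e \<in> E" using ab(4) by (simp add: mem_nbrs_iff)
  qed
  then show ?thesis using assms(2) by (simp add: is_K4_def)
qed

subsection \<open>Contracting a set of vertices\<close>

text \<open>Only adjacency is prescribed, which determines \<open>E'\<close> once \<open>(V', E')\<close> is simple. The new
  vertex \<open>c\<close> may be fresh or one of the vertices of \<open>T\<close>.\<close>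
definition contraction :: "'a set \<Rightarrow> 'a set set \<Rightarrow> 'a set \<Rightarrow> 'a \<Rightarrow> 'a set \<Rightarrow> 'a set set \<Rightarrow> bool" where
  "contraction V E T c V' E' \<longleftrightarrow> T \<subseteq> V \<and> V' = insert c (V - T) \<and> c \<notin> V - T \<and>
     (\<forall>a\<in>V - T. \<forall>b\<in>V - T. {a, b} \<in> E' \<longleftrightarrow> {a, b} \<in> E) \<and>
     (\<forall>d\<in>V - T. {c, d} \<in> E' \<longleftrightarrow> (\<exists>t\<in>T. {t, d} \<in> E))"

definition contract_edges :: "'a set set \<Rightarrow> 'a set \<Rightarrow> 'a \<Rightarrow> 'a set set" where
  "contract_edges E T c = {e \<in> E. e \<inter> T = {}} \<union> {{c, d} | t d. t \<in> T \<and> d \<notin> T \<and> {t, d} \<in> E}"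

definition contract_vertex :: "'a set \<Rightarrow> 'a \<Rightarrow> 'a \<Rightarrow> 'a" where
  "contract_vertex T c x = (if x \<in> T then c else x)"

lemma contraction_contract_edges:
  assumes "T \<subseteq> V" "c \<in> T"
  shows "contraction V E T c (insert c (V - T)) (contract_edges E T c)"
proof -
  have "{a, b} \<in> contract_edges E T c \<longleftrightarrow> {a, b} \<in> E" if "a \<in> V - T" "b \<in> V - T" for a b
    using that assms(2) by (auto simp: contract_edges_def doubleton_eq_iff)
  moreover have "{c, d} \<in> contract_edges E T c \<longleftrightarrow> (\<exists>t\<in>T. {t, d} \<in> E)" if "d \<in> V - T" for d
    using that assms(2) by (auto simp: contract_edges_def doubleton_eq_iff)
  ultimately show ?thesis using assms unfolding contraction_def by blast
qed

lemma simple_graph_contract_edges: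
  assumes "simple_graph V E" "c \<in> T"
  shows "simple_graph (insert c (V - T)) (contract_edges E T c)"
  unfolding simple_graph_def
proof (intro conjI ballI)
  show "finite (insert c (V - T))" using simple_graph_finite[OF assms(1)] by simp
next
  fix e assume "e \<in> contract_edges E T c"
  then consider "e \<in> E" "e \<inter> T = {}" | t d where "t \<in> T" "d \<notin> T" "{t, d} \<in> E" "e = {c, d}"
    unfolding contract_edges_def by blast
  then show "\<exists>a b. a \<in> insert c (V - T) \<and> b \<in> insert c (V - T) \<and> a \<noteq> b \<and> e = {a, b}"
  proof cases
    case 1
    then obtain a b where "a \<in> V" "b \<in> V" "a \<noteq> b" "e = {a, b}"
      using assms(1) unfolding simple_graph_def by blast
    with 1 show ?thesis by blast
  next
    case 2
    then show ?thesis using simple_graph_edgeD[OF assms(1)] assms(2) by blast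
  qed
qed

lemma card_contraction:
  assumes "contraction V E T c V' E'" "finite V"
  shows "card V' = card V - card T + 1"
  using assms finite_subset[of T V] unfolding contraction_def by (simp add: card_Diff_subset)

lemma nbrs_contraction:
  assumes C: "contraction V E T c V' E'" and "simple_graph V E" "simple_graph V' E'" "d \<in> V - T"
  shows "nbrs E' d = (nbrs E d - T) \<union> (if nbrs E d \<inter> T = {} then {} else {c})"
proof (rule set_eqI)
  fix x
  have V': "V' = insert c (V - T)" and c: "c \<notin> V - T"
    and old: "\<forall>a\<in>V - T. \<forall>b\<in>V - T. {a, b} \<in> E' \<longleftrightarrow> {a, b} \<in> E"
    and new: "\<forall>d\<in>V - T. {c, d} \<in> E' \<longleftrightarrow> (\<exists>t\<in>T. {t, d} \<in> E)"
    using C unfolding contraction_def by blast+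
  have c_notin: "c \<notin> nbrs E d - T" using c nbrs_subset[OF assms(2)] by blast
  consider "x = c" | "x \<in> V - T" | "x \<notin> V'" using V' by blast
  then show "x \<in> nbrs E' d \<longleftrightarrow> x \<in> (nbrs E d - T) \<union> (if nbrs E d \<inter> T = {} then {} else {c})"
  proof cases
    case 1
    have "c \<in> nbrs E' d \<longleftrightarrow> (\<exists>t\<in>T. {t, d} \<in> E)" using new assms(4) by (simp add: mem_nbrs_iff)
    also have "\<dots> \<longleftrightarrow> nbrs E d \<inter> T \<noteq> {}" by (auto simp: mem_nbrs_iff)
    finally show ?thesis using 1 c_notin by auto
  next
    case 2
    then have "x \<noteq> c" using c by blast
    moreover have "x \<in> nbrs E' d \<longleftrightarrow> x \<in> nbrs E d" using old 2 assms(4) by (simp add: mem_nbrs_iff)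
    ultimately show ?thesis using 2 by auto
  next
    case 3
    then have "x \<notin> nbrs E' d" "x \<noteq> c" "x \<notin> nbrs E d - T"
      using nbrs_subset[OF assms(3)] nbrs_subset[OF assms(2)] V' by blast+
    then show ?thesis by auto
  qed
qed

lemma nbrs_contraction_centre:
  assumes C: "contraction V E T c V' E'" and "simple_graph V E" "simple_graph V' E'"
  shows "nbrs E' c = (\<Union>t\<in>T. nbrs E t) - T"
proof (rule set_eqI)
  fix x
  have V': "V' = insert c (V - T)" and c: "c \<notin> V - T"
    and new: "\<forall>d\<in>V - T. {c, d} \<in> E' \<longleftrightarrow> (\<exists>t\<in>T. {t, d} \<in> E)"
    using C unfolding contraction_def by blast+
  have "x \<in> V - T" if "x \<in> (\<Union>t\<in>T. nbrs E t) - T" using nbrs_subset[OF assms(2)] that by blast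
  moreover have "x \<in> V - T" if "x \<in> nbrs E' c"
  proof -
    have "{x, c} \<in> E'" using that by (simp add: mem_nbrs_iff)
    then show ?thesis using simple_graph_edgeD[OF assms(3)] V' by blast
  qed
  moreover have "x \<in> nbrs E' c \<longleftrightarrow> x \<in> (\<Union>t\<in>T. nbrs E t) - T" if "x \<in> V - T"
  proof -
    have "x \<in> nbrs E' c \<longleftrightarrow> (\<exists>t\<in>T. {t, x} \<in> E)"
      using new that by (simp add: mem_nbrs_iff insert_commute[of x c])
    also have "\<dots> \<longleftrightarrow> x \<in> (\<Union>t\<in>T. nbrs E t)" by (auto simp: mem_nbrs_iff insert_commute[of x])
    finally show ?thesis using that by blast
  qed
  ultimately show "x \<in> nbrs E' c \<longleftrightarrow> x \<in> (\<Union>t\<in>T. nbrs E t) - T" by blast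
qed

lemma bij_betw_contraction_map:
  assumes \<phi>: "bij_betw \<phi> V1 V2" and T: "T \<subseteq> V1" and c1: "c1 \<notin> V1 - T" and c2: "c2 \<notin> V2 - \<phi> ` T"
  shows "bij_betw (\<phi>(c1 := c2)) (insert c1 (V1 - T)) (insert c2 (V2 - \<phi> ` T))"
proof -
  have "bij_betw \<phi> T (\<phi> ` T)"
    using inj_on_imp_bij_betw inj_on_subset[OF bij_betw_imp_inj_on[OF \<phi>] T] by blast
  then have "bij_betw \<phi> (V1 - T) (V2 - \<phi> ` T)"
    using bij_betw_DiffI[OF \<phi> _ T] bij_betw_imp_surj_on[OF \<phi>] T by blast
  moreover have "(\<phi>(c1 := c2)) x = \<phi> x" if "x \<in> V1 - T" for x using that c1 by auto
  ultimately have "bij_betw (\<phi>(c1 := c2)) (V1 - T) (V2 - \<phi> ` T)"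
    using bij_betw_cong[of "V1 - T" "\<phi>(c1 := c2)" \<phi>] by blast
  then show ?thesis
    using notIn_Un_bij_betw3[of c1 "V1 - T" "\<phi>(c1 := c2)" "V2 - \<phi> ` T"] c1 c2 by simp
qed

lemma contraction_graph_iso:
  assumes \<phi>: "bij_betw \<phi> V1 V2" and adj: "\<forall>a\<in>V1. \<forall>b\<in>V1. {a, b} \<in> E1 \<longleftrightarrow> {\<phi> a, \<phi> b} \<in> E2"
    and C1: "contraction V1 E1 T c1 V1' E1'" and C2: "contraction V2 E2 (\<phi> ` T) c2 V2' E2'"
    and s1: "simple_graph V1' E1'" and s2: "simple_graph V2' E2'"
  shows "graph_iso V1' E1' V2' E2'"
proof -
  have T: "T \<subseteq> V1" and V1': "V1' = insert c1 (V1 - T)" and c1: "c1 \<notin> V1 - T"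
    and old1: "\<forall>a\<in>V1 - T. \<forall>b\<in>V1 - T. {a, b} \<in> E1' \<longleftrightarrow> {a, b} \<in> E1"
    and new1: "\<forall>d\<in>V1 - T. {c1, d} \<in> E1' \<longleftrightarrow> (\<exists>t\<in>T. {t, d} \<in> E1)"
    using C1 unfolding contraction_def by blast+
  have V2': "V2' = insert c2 (V2 - \<phi> ` T)" and c2: "c2 \<notin> V2 - \<phi> ` T"
    and old2: "\<forall>a\<in>V2 - \<phi> ` T. \<forall>b\<in>V2 - \<phi> ` T. {a, b} \<in> E2' \<longleftrightarrow> {a, b} \<in> E2"
    and new2: "\<forall>d\<in>V2 - \<phi> ` T. {c2, d} \<in> E2' \<longleftrightarrow> (\<exists>t\<in>\<phi> ` T. {t, d} \<in> E2)"
    using C2 unfolding contraction_def by blast+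
  have rest: "\<phi> ` (V1 - T) = V2 - \<phi> ` T"
  proof -
    have "\<phi> ` (V1 - T) = \<phi> ` V1 - \<phi> ` T"
      by (rule inj_on_image_set_diff[OF bij_betw_imp_inj_on[OF \<phi>]]) (use T in auto)
    then show ?thesis using bij_betw_imp_surj_on[OF \<phi>] by simp
  qed
  define \<psi> where "\<psi> = \<phi>(c1 := c2)"
  have \<psi>_rest: "\<psi> x = \<phi> x" if "x \<in> V1 - T" for x using that c1 unfolding \<psi>_def by auto
  have \<psi>_c1: "\<psi> c1 = c2" by (simp add: \<psi>_def)
  have bij: "bij_betw \<psi> V1' V2'"
    unfolding V1' V2' \<psi>_def by (rule bij_betw_contraction_map[OF \<phi> T c1 c2])
  have c1_adj: "{c1, b} \<in> E1' \<longleftrightarrow> {c2, \<psi> b} \<in> E2'" if b: "b \<in> V1 - T" for b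
  proof -
    have adj_b: "{t, b} \<in> E1 \<longleftrightarrow> {\<phi> t, \<phi> b} \<in> E2" if "t \<in> T" for t using adj T b that by blast
    have "\<phi> b \<in> V2 - \<phi> ` T" using rest b by blast
    have "{c1, b} \<in> E1' \<longleftrightarrow> (\<exists>t\<in>T. {t, b} \<in> E1)" using new1 b by blast
    also have "\<dots> \<longleftrightarrow> (\<exists>t\<in>\<phi> ` T. {t, \<phi> b} \<in> E2)" using adj_b by blast
    also have "\<dots> \<longleftrightarrow> {c2, \<phi> b} \<in> E2'" using new2 \<open>\<phi> b \<in> V2 - \<phi> ` T\<close> by blast
    finally show ?thesis using \<psi>_rest b by simp
  qed
  have "{a, b} \<in> E1' \<longleftrightarrow> {\<psi> a, \<psi> b} \<in> E2'" if ab: "a \<in> V1'" "b \<in> V1'" for a b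
  proof -
    consider "a = c1" "b = c1" | "a = c1" "b \<in> V1 - T" | "a \<in> V1 - T" "b = c1" | "a \<in> V1 - T" "b \<in> V1 - T"
      using ab V1' by blast
    then show ?thesis
    proof cases
      case 1 then show ?thesis using singleton_not_edge[OF s1] singleton_not_edge[OF s2] by simp
    next
      case 2 then show ?thesis using c1_adj \<psi>_c1 by simp
    next
      case 3 then show ?thesis using c1_adj[of a] \<psi>_c1 by (simp add: insert_commute[of a] insert_commute[of "\<psi> a"])
    next
      case 4
      then have "\<phi> a \<in> V2 - \<phi> ` T" "\<phi> b \<in> V2 - \<phi> ` T" using rest by blast+
      then have "{\<phi> a, \<phi> b} \<in> E2' \<longleftrightarrow> {\<phi> a, \<phi> b} \<in> E2" using old2 by blast
      moreover have "{a, b} \<in> E1' \<longleftrightarrow> {a, b} \<in> E1" using old1 4 by blast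
      moreover have "{a, b} \<in> E1 \<longleftrightarrow> {\<phi> a, \<phi> b} \<in> E2" using adj 4 by blast
      ultimately show ?thesis using \<psi>_rest 4 by simp
    qed
  qed
  then show ?thesis using bij unfolding graph_iso_def by blast
qed

lemma contractions_graph_iso:
  assumes "contraction V E T c1 V1 E1" "contraction V E T c2 V2 E2" "simple_graph V1 E1" "simple_graph V2 E2"
  shows "graph_iso V1 E1 V2 E2"
proof (rule contraction_graph_iso[OF bij_betw_id _ assms(1) _ assms(3,4)])
  show "\<forall>a\<in>V. \<forall>b\<in>V. {a, b} \<in> E \<longleftrightarrow> {id a, id b} \<in> E" by simp
  show "contraction V E (id ` T) c2 V2 E2" using assms(2) by simp
qed

lemma triangle_outer_nbrs:
  assumes "cubic V E" "diamond_free E" "triangle E T"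
  obtains z where "inj_on z T" "z ` T \<inter> T = {}" "\<And>t. t \<in> T \<Longrightarrow> nbrs E t = insert (z t) (T - {t})"
proof -
  have sg: "simple_graph V E" using assms(1) by (simp add: cubic_def)
  have "\<exists>z. z \<notin> T \<and> nbrs E t = insert z (T - {t})" if t: "t \<in> T" for t
  proof -
    have sub: "T - {t} \<subseteq> nbrs E t"
    proof
      fix x assume "x \<in> T - {t}"
      then show "x \<in> nbrs E t" using triangle_adj[OF assms(3), of x t] t by (simp add: mem_nbrs_iff)
    qed
    have fin: "finite (nbrs E t)" by (rule finite_nbrs[OF sg])
    have "card (T - {t}) = 2" using t assms(3) unfolding triangle_def by simp
    moreover have "card (nbrs E t) = 3"
      using assms(1) triangle_subset[OF sg assms(3)] t unfolding cubic_def by blast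
    ultimately have "card (nbrs E t - (T - {t})) = 1"
      using sub fin finite_subset[OF sub fin] by (simp add: card_Diff_subset)
    then obtain z where z: "nbrs E t - (T - {t}) = {z}" by (rule card_1_singletonE)
    then have "{z, t} \<in> E" by (auto simp: mem_nbrs_iff)
    then have "z \<noteq> t" using simple_graph_edgeD[OF sg] by blast
    then show ?thesis using z sub by blast
  qed
  then obtain z where z: "\<forall>t\<in>T. z t \<notin> T \<and> nbrs E t = insert (z t) (T - {t})" by metis
  have "inj_on z T"
  proof (rule inj_onI)
    fix t t' assume "t \<in> T" "t' \<in> T" "z t = z t'"
    moreover have "z t \<in> nbrs E t" "z t' \<in> nbrs E t'" using z \<open>t \<in> T\<close> \<open>t' \<in> T\<close> by auto
    then have "{t, z t} \<in> E" "{t', z t'} \<in> E" by (simp_all add: mem_nbrs_iff')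
    ultimately show "t = t'"
      using diamond_free_triangle_unique_nbr[OF assms(2,3)] z by metis
  qed
  then show ?thesis using that z by blast
qed

lemma card_ge_6_if_triangle:
  assumes "cubic V E" "diamond_free E" "triangle E T" shows "6 \<le> card V"
proof -
  obtain z where z: "inj_on z T" "z ` T \<inter> T = {}" "\<And>t. t \<in> T \<Longrightarrow> nbrs E t = insert (z t) (T - {t})"
    using triangle_outer_nbrs[OF assms] by blast
  have sg: "simple_graph V E" using assms(1) by (simp add: cubic_def)
  have T: "card T = 3" "T \<subseteq> V" using assms(3) triangle_subset[OF sg] unfolding triangle_def by auto
  then have fin: "finite T" by (metis card.infinite zero_neq_numeral)
  have "z ` T \<subseteq> V" using z(3) nbrs_subset[OF sg] by blast
  then have "card (T \<union> z ` T) \<le> card V" using T(2) simple_graph_finite[OF sg] by (intro card_mono) auto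
  moreover have "card (T \<union> z ` T) = 6"
    using card_Un_disjoint[of T "z ` T"] fin z(1,2) T(1) by (simp add: card_image Int_commute)
  ultimately show ?thesis by simp
qed

lemma cubic_contraction:
  assumes cub: "cubic V E" and df: "diamond_free E" and tri: "triangle E T"
    and C: "contraction V E T c V' E'" and sB: "simple_graph V' E'"
  shows "cubic V' E'"
proof -
  have sg: "simple_graph V E" using cub by (simp add: cubic_def)
  obtain z where z: "inj_on z T" "z ` T \<inter> T = {}" "\<And>t. t \<in> T \<Longrightarrow> nbrs E t = insert (z t) (T - {t})"
    using triangle_outer_nbrs[OF cub df tri] by blast
  have V': "V' = insert c (V - T)" and c: "c \<notin> V - T" using C unfolding contraction_def by blast+
  have "card (nbrs E' u) = 3" if u: "u \<in> V'" for u
  proof (cases "u = c")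
    case True
    have "nbrs E' c = z ` T" using nbrs_contraction_centre[OF C sg sB] z(2,3) by auto
    then show ?thesis using True z(1) tri by (simp add: card_image triangle_def)
  next
    case False
    then have u: "u \<in> V - T" using u V' by blast
    have fin: "finite (nbrs E u)" by (rule finite_nbrs[OF sg])
    have deg: "card (nbrs E u) = 3" using cub u unfolding cubic_def by blast
    show ?thesis
    proof (cases "nbrs E u \<inter> T = {}")
      case True
      then show ?thesis using nbrs_contraction[OF C sg sB u] deg by (simp add: Diff_triv)
    next
      case False
      then obtain t where t: "t \<in> nbrs E u" "t \<in> T" by blast
      have "nbrs E u \<inter> T = {t}"
        using t diamond_free_triangle_unique_nbr[OF df tri _ _ _] u by (auto simp: mem_nbrs_iff)
      then have "nbrs E u - T = nbrs E u - {t}" by blast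
      moreover have "c \<notin> nbrs E u - T" using c nbrs_subset[OF sg] by blast
      ultimately show ?thesis
        using nbrs_contraction[OF C sg sB u] False fin deg t(1) by (simp add: card_Suc_Diff1)
    qed
  qed
  then show ?thesis using sB unfolding cubic_def by blast
qed

subsection \<open>Replacing a vertex by a triangle\<close>

text \<open>\<open>tri_data\<close> only requires \<open>v\<^sub>i \<notin> V - {v}\<close>, so one of the new vertices may reuse the name \<open>v\<close>;
  hence old vertices are always described as members of \<open>V - {v}\<close>.\<close>
locale triangle_replacement =
  fixes V :: "'a set" and E :: "'a set set" and v v1 v2 v3 x1 x2 x3 :: 'a
  assumes simple: "simple_graph V E" and data: "tri_data V E v v1 v2 v3 x1 x2 x3"
begin

abbreviation "V' \<equiv> tri_vertices V v v1 v2 v3"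
abbreviation "E' \<equiv> tri_edges E v v1 v2 v3 x1 x2 x3"

lemma v_in: "v \<in> V"
  and nbrs_v: "nbrs E v = {x1, x2, x3}"
  and x_distinct: "x1 \<noteq> x2" "x2 \<noteq> x3" "x1 \<noteq> x3"
  and new_distinct: "v1 \<noteq> v2" "v2 \<noteq> v3" "v1 \<noteq> v3"
  and new_fresh: "v1 \<notin> V - {v}" "v2 \<notin> V - {v}" "v3 \<notin> V - {v}"
  using data unfolding tri_data_def by auto

lemma adj_v_iff: "{a, v} \<in> E \<longleftrightarrow> a = x1 \<or> a = x2 \<or> a = x3"
  using nbrs_v unfolding nbrs_def by blast

lemma x_in: "x1 \<in> V - {v}" "x2 \<in> V - {v}" "x3 \<in> V - {v}"
  using adj_v_iff simple_graph_edgeD[OF simple] by blast+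

lemma new_ne_x:
  "v1 \<noteq> x1" "v1 \<noteq> x2" "v1 \<noteq> x3" "v2 \<noteq> x1" "v2 \<noteq> x2" "v2 \<noteq> x3" "v3 \<noteq> x1" "v3 \<noteq> x2" "v3 \<noteq> x3"
  using new_fresh x_in by metis+

lemma vertices_expanded: "V' = (V - {v}) \<union> {v1, v2, v3}"
  by (simp add: tri_vertices_def)

lemma edge_expanded_iff:
  "{a, b} \<in> E' \<longleftrightarrow> ({a, b} \<in> E \<and> a \<in> V - {v} \<and> b \<in> V - {v}) \<or>
     (a = v1 \<and> b = v2) \<or> (a = v2 \<and> b = v1) \<or> (a = v2 \<and> b = v3) \<or> (a = v3 \<and> b = v2) \<or>
     (a = v3 \<and> b = v1) \<or> (a = v1 \<and> b = v3) \<or> (a = v1 \<and> b = x1) \<or> (a = x1 \<and> b = v1) \<or>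
     (a = v2 \<and> b = x2) \<or> (a = x2 \<and> b = v2) \<or> (a = v3 \<and> b = x3) \<or> (a = x3 \<and> b = v3)"
proof -
  have "{a, b} \<in> E' \<longleftrightarrow> ({a, b} \<in> E \<and> a \<noteq> v \<and> b \<noteq> v) \<or>
     (a = v1 \<and> b = v2) \<or> (a = v2 \<and> b = v1) \<or> (a = v2 \<and> b = v3) \<or> (a = v3 \<and> b = v2) \<or>
     (a = v3 \<and> b = v1) \<or> (a = v1 \<and> b = v3) \<or> (a = v1 \<and> b = x1) \<or> (a = x1 \<and> b = v1) \<or>
     (a = v2 \<and> b = x2) \<or> (a = x2 \<and> b = v2) \<or> (a = v3 \<and> b = x3) \<or> (a = x3 \<and> b = v3)"
    unfolding tri_edges_def by (auto simp: doubleton_eq_iff)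
  moreover have "({a, b} \<in> E \<and> a \<noteq> v \<and> b \<noteq> v) \<longleftrightarrow> ({a, b} \<in> E \<and> a \<in> V - {v} \<and> b \<in> V - {v})"
    using simple_graph_edgeD[OF simple, of a b] by blast
  ultimately show ?thesis by (simp only:)
qed

lemma edge_expanded_sym: "{a, b} \<in> E' \<longleftrightarrow> {b, a} \<in> E'"
  by (simp add: insert_commute)

lemma adj_expanded_old_iff: "a \<in> V - {v} \<Longrightarrow> b \<in> V - {v} \<Longrightarrow> {a, b} \<in> E' \<longleftrightarrow> {a, b} \<in> E"
  unfolding edge_expanded_iff using new_fresh by auto

lemma adj_v_iff_expanded:
  "b \<in> V - {v} \<Longrightarrow> {v, b} \<in> E \<longleftrightarrow> ({v1, b} \<in> E' \<or> {v2, b} \<in> E' \<or> {v3, b} \<in> E')"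
  unfolding edge_expanded_iff using new_fresh adj_v_iff[of b] by (auto simp: insert_commute)

lemma adj_v1_iff: "{v1, u} \<in> E' \<longleftrightarrow> u = v2 \<or> u = v3 \<or> u = x1"
  and adj_v2_iff: "{v2, u} \<in> E' \<longleftrightarrow> u = v1 \<or> u = v3 \<or> u = x2"
  and adj_v3_iff: "{v3, u} \<in> E' \<longleftrightarrow> u = v1 \<or> u = v2 \<or> u = x3"
  unfolding edge_expanded_iff using new_distinct new_fresh new_ne_x by auto

lemma simple_graph_expanded: "simple_graph V' E'"
  unfolding simple_graph_def
proof (intro conjI ballI)
  show "finite V'" using simple_graph_finite[OF simple] by (simp add: vertices_expanded)
next
  fix e assume "e \<in> E'"
  then consider "e \<in> E" "v \<notin> e" | "e \<in> {{v1, v2}, {v2, v3}, {v3, v1}, {v1, x1}, {v2, x2}, {v3, x3}}"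
    unfolding tri_edges_def by blast
  then show "\<exists>a b. a \<in> V' \<and> b \<in> V' \<and> a \<noteq> b \<and> e = {a, b}"
  proof cases
    case 1
    then obtain a b where "a \<in> V" "b \<in> V" "a \<noteq> b" "e = {a, b}"
      using simple unfolding simple_graph_def by blast
    with 1 show ?thesis unfolding vertices_expanded by blast
  next
    case 2
    then show ?thesis unfolding vertices_expanded using new_distinct new_ne_x x_in by auto
  qed
qed

lemma card_expanded: "card V' = card V + 2"
proof -
  have fin: "finite V" using simple_graph_finite[OF simple] .
  have "card V' = card (V - {v}) + card {v1, v2, v3}" unfolding vertices_expanded
    by (rule card_Un_disjoint) (use fin new_fresh in auto)
  moreover have "card {v1, v2, v3} = 3" using new_distinct by auto
  moreover have "card (V - {v}) + 1 = card V" using fin v_in card_Suc_Diff1 by fastforce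
  ultimately show ?thesis by simp
qed

lemma adj_expanded_old_vertex_iff:
  assumes "u \<in> V - {v}"
  shows "{t, u} \<in> E' \<longleftrightarrow> ({t, u} \<in> E \<and> t \<noteq> v) \<or> (t = v1 \<and> u = x1) \<or> (t = v2 \<and> u = x2) \<or> (t = v3 \<and> u = x3)"
proof -
  have "u \<noteq> v1" "u \<noteq> v2" "u \<noteq> v3" using assms new_fresh by blast+
  moreover have "({t, u} \<in> E \<and> t \<in> V - {v} \<and> u \<in> V - {v}) \<longleftrightarrow> ({t, u} \<in> E \<and> t \<noteq> v)"
    using assms simple_graph_edgeD[OF simple, of t u] by blast
  ultimately show ?thesis unfolding edge_expanded_iff by (simp only:) simp
qed

lemma card_nbrs_expanded_old:
  assumes u: "u \<in> V - {v}" shows "card (nbrs E' u) = card (nbrs E u)"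
proof -
  have nbrs_u: "nbrs E' u = (nbrs E u - {v}) \<union>
      {t. (t = v1 \<and> u = x1) \<or> (t = v2 \<and> u = x2) \<or> (t = v3 \<and> u = x3)}"
    by (auto simp: mem_nbrs_iff adj_expanded_old_vertex_iff[OF u] adj_v1_iff adj_v2_iff adj_v3_iff)
  have fin: "finite (nbrs E u)" by (rule finite_nbrs[OF simple])
  have swap: "card (insert t (nbrs E u - {v})) = card (nbrs E u)" if "t \<notin> V - {v}" "v \<in> nbrs E u" for t
  proof -
    have "t \<notin> nbrs E u - {v}" using that(1) nbrs_subset[OF simple] by blast
    then show ?thesis using that(2) fin by (metis card_Suc_Diff1 card_insert_disjoint finite_Diff)
  qed
  consider "u = x1" | "u = x2" | "u = x3" | "u \<notin> {x1, x2, x3}" by blast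
  then show ?thesis
  proof cases
    case 1
    then have "nbrs E' u = insert v1 (nbrs E u - {v})" "v \<in> nbrs E u"
      using nbrs_u x_distinct adj_v_iff by (auto simp: mem_nbrs_iff')
    then show ?thesis using swap new_fresh by simp
  next
    case 2
    then have "nbrs E' u = insert v2 (nbrs E u - {v})" "v \<in> nbrs E u"
      using nbrs_u x_distinct adj_v_iff by (auto simp: mem_nbrs_iff')
    then show ?thesis using swap new_fresh by simp
  next
    case 3
    then have "nbrs E' u = insert v3 (nbrs E u - {v})" "v \<in> nbrs E u"
      using nbrs_u x_distinct adj_v_iff by (auto simp: mem_nbrs_iff')
    then show ?thesis using swap new_fresh by simp
  next
    case 4
    then have "v \<notin> nbrs E u" using adj_v_iff by (simp add: mem_nbrs_iff')
    then show ?thesis using nbrs_u 4 by simp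
  qed
qed

lemma nbrs_expanded_new: "nbrs E' v1 = {v2, v3, x1}" "nbrs E' v2 = {v1, v3, x2}" "nbrs E' v3 = {v1, v2, x3}"
  by (simp_all add: set_eq_iff mem_nbrs_iff' adj_v1_iff adj_v2_iff adj_v3_iff)

lemma cubic_expanded: assumes "cubic V E" shows "cubic V' E'"
  unfolding cubic_def
proof (intro conjI ballI simple_graph_expanded)
  fix u assume "u \<in> V'"
  then consider "u \<in> {v1, v2, v3}" | "u \<in> V - {v}" using vertices_expanded by auto
  then show "card (nbrs E' u) = 3"
  proof cases
    case 1
    then show ?thesis using new_distinct new_ne_x by (auto simp: nbrs_expanded_new)
  next
    case 2
    then show ?thesis using card_nbrs_expanded_old assms unfolding cubic_def by simp
  qed
qed

lemma triangle_new_closed: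
  assumes "{a, b} \<in> E'" "{a, c} \<in> E'" "{b, c} \<in> E'" "{a, b, c} \<inter> {v1, v2, v3} \<noteq> {}"
  shows "{a, b, c} \<subseteq> {v1, v2, v3}"
proof -
  have step: "q \<in> {v1, v2, v3}"
    if "{p, q} \<in> E'" "{p, r} \<in> E'" "{q, r} \<in> E'" "p \<in> {v1, v2, v3}" for p q r
  proof -
    have "q \<noteq> r" using simple_graph_edgeD[OF simple_graph_expanded that(3)] by blast
    moreover have "{v2, x1} \<notin> E'" "{v3, x1} \<notin> E'" "{v1, x2} \<notin> E'" "{v3, x2} \<notin> E'"
      "{v1, x3} \<notin> E'" "{v2, x3} \<notin> E'"
      using adj_v1_iff adj_v2_iff adj_v3_iff new_ne_x x_distinct by metis+
    moreover have "{x1, v2} \<notin> E'" "{x1, v3} \<notin> E'" "{x2, v1} \<notin> E'" "{x2, v3} \<notin> E'"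
      "{x3, v1} \<notin> E'" "{x3, v2} \<notin> E'"
      using calculation(2-7) edge_expanded_sym by blast+
    ultimately show ?thesis
      using that adj_v1_iff[of q] adj_v1_iff[of r] adj_v2_iff[of q] adj_v2_iff[of r]
        adj_v3_iff[of q] adj_v3_iff[of r] by auto
  qed
  have ba: "{b, a} \<in> E'" and ca: "{c, a} \<in> E'" and cb: "{c, b} \<in> E'"
    using assms(1-3) edge_expanded_sym by blast+
  from assms(4) consider "a \<in> {v1, v2, v3}" | "b \<in> {v1, v2, v3}" | "c \<in> {v1, v2, v3}" by blast
  then show ?thesis
  proof cases
    case 1 then show ?thesis using step[OF assms(1-3) 1] step[OF assms(2,1) cb 1] by blast
  next
    case 2 then show ?thesis using step[OF ba assms(3,2) 2] step[OF assms(3) ba ca 2] by blast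
  next
    case 3 then show ?thesis using step[OF ca cb assms(1) 3] step[OF cb ca ba 3] by blast
  qed
qed

lemma triangle_new: "triangle E' {v1, v2, v3}"
  unfolding triangle_def using new_distinct adj_v1_iff adj_v2_iff adj_v3_iff by auto

lemma triangle_expanded_cases:
  assumes "triangle E' T" shows "T = {v1, v2, v3} \<or> (T \<subseteq> V - {v} \<and> triangle E T)"
proof (cases "T \<inter> {v1, v2, v3} = {}")
  case True
  have "T \<subseteq> V'" using triangle_subset[OF simple_graph_expanded assms] .
  then have sub: "T \<subseteq> V - {v}" using True vertices_expanded by blast
  have "{a, b} \<in> E" if "a \<in> T" "b \<in> T" "a \<noteq> b" for a b
    using triangle_adj[OF assms that] adj_expanded_old_iff sub that by blast
  then show ?thesis using sub assms unfolding triangle_def by blast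
next
  case False
  then obtain p where p: "p \<in> T" "p \<in> {v1, v2, v3}" by blast
  have "q \<in> {v1, v2, v3}" if q: "q \<in> T" for q
  proof (cases "q = p")
    case False
    then have "p \<noteq> q" by simp
    obtain r where r: "T = {p, q, r}" "r \<noteq> p" "r \<noteq> q" by (rule triangle_third[OF assms p(1) q \<open>p \<noteq> q\<close>])
    then have "{p, q} \<in> E'" "{p, r} \<in> E'" "{q, r} \<in> E'"
      using triangle_adj[OF assms] \<open>p \<noteq> q\<close> by auto
    then show ?thesis using triangle_new_closed p(2) by blast
  qed (use p in simp)
  then have "T \<subseteq> {v1, v2, v3}" by blast
  moreover have "card T = card {v1, v2, v3}" using assms new_distinct unfolding triangle_def by simp
  ultimately show ?thesis by (simp add: card_subset_eq)
qed

lemma diamond_free_expanded: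
  assumes "card V = 4 \<or> diamond_free E" shows "diamond_free E'"
  unfolding diamond_free_def
proof (intro allI impI)
  fix a b c d
  assume ab: "{a, b} \<in> E'" and ac: "{a, c} \<in> E'" and bc: "{b, c} \<in> E'"
    and ad: "{a, d} \<in> E'" and bd: "{b, d} \<in> E'"
  show "c = d"
  proof (rule ccontr)
    assume cd: "c \<noteq> d"
    have ne: "a \<noteq> b" "a \<noteq> c" "b \<noteq> c" "a \<noteq> d" "b \<noteq> d"
      using simple_graph_edgeD[OF simple_graph_expanded] ab ac bc ad bd by blast+
    then have four: "card {a, b, c, d} = 4" using cd by simp
    show False
    proof (cases "{a, b, c, d} \<inter> {v1, v2, v3} = {}")
      case False
      then have "{a, b, c} \<inter> {v1, v2, v3} \<noteq> {} \<or> {a, b, d} \<inter> {v1, v2, v3} \<noteq> {}" by blast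
      then have "{a, b, c, d} \<subseteq> {v1, v2, v3}"
        using triangle_new_closed[OF ab ac bc] triangle_new_closed[OF ab ad bd] by blast
      then have "card {a, b, c, d} \<le> card {v1, v2, v3}" by (intro card_mono) auto
      then show False using four new_distinct by simp
    next
      case True
      then have V: "a \<in> V - {v}" "b \<in> V - {v}" "c \<in> V - {v}" "d \<in> V - {v}"
        using simple_graph_edgeD[OF simple_graph_expanded] ab ac ad vertices_expanded by blast+
      then have E: "{a, b} \<in> E" "{a, c} \<in> E" "{b, c} \<in> E" "{a, d} \<in> E" "{b, d} \<in> E"
        using adj_expanded_old_iff ab ac bc ad bd by blast+
      show False using assms
      proof
        assume "diamond_free E" then show False using diamond_freeD[OF _ E] cd by blast
      next
        assume "card V = 4"
        then have "card (V - {v}) = 3" using v_in simple_graph_finite[OF simple] by simp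
        moreover have "card {a, b, c, d} \<le> card (V - {v})"
          using V simple_graph_finite[OF simple] by (intro card_mono) auto
        ultimately show False using four by simp
      qed
    qed
  qed
qed

lemma contraction_expanded: "contraction V' E' {v1, v2, v3} v V E"
proof -
  have rest: "V' - {v1, v2, v3} = V - {v}" using vertices_expanded new_fresh by auto
  have "\<forall>a\<in>V - {v}. \<forall>b\<in>V - {v}. {a, b} \<in> E \<longleftrightarrow> {a, b} \<in> E'"
    using adj_expanded_old_iff by blast
  moreover have "\<forall>d\<in>V - {v}. {v, d} \<in> E \<longleftrightarrow> (\<exists>t\<in>{v1, v2, v3}. {t, d} \<in> E')"
    using adj_v_iff_expanded by simp
  moreover have "{v1, v2, v3} \<subseteq> V'" "V = insert v (V - {v})" using vertices_expanded v_in by auto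
  ultimately show ?thesis unfolding contraction_def rest by blast
qed


lemma vertices_expanded_diff: "A \<subseteq> V - {v} \<Longrightarrow> V' - A = (V - {v} - A) \<union> {v1, v2, v3}"
  using vertices_expanded new_fresh by auto

context
  fixes A :: "'a set" and c :: 'a and VB :: "'a set" and EB :: "'a set set"
  assumes contr: "contraction V E A c VB EB" and simple_contr: "simple_graph VB EB"
    and A_old: "A \<subseteq> V - {v}" and c_not_new: "c \<notin> {v1, v2, v3}"
begin

lemma tri_data_contraction:
  assumes at_most_one: "\<not> (x1 \<in> A \<and> x2 \<in> A)" "\<not> (x1 \<in> A \<and> x3 \<in> A)" "\<not> (x2 \<in> A \<and> x3 \<in> A)"
  shows "tri_data VB EB v v1 v2 v3 (contract_vertex A c x1) (contract_vertex A c x2) (contract_vertex A c x3)"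
proof -
  have VB: "VB = insert c (V - A)" and c_out: "c \<notin> V - A"
    using contr unfolding contraction_def by blast+
  have v_rest: "v \<in> V - A" using v_in A_old by blast
  have x_V: "x1 \<in> V" "x2 \<in> V" "x3 \<in> V" using x_in by blast+
  have ne: "contract_vertex A c a \<noteq> contract_vertex A c b"
    if "a \<in> V" "b \<in> V" "a \<noteq> b" "\<not> (a \<in> A \<and> b \<in> A)" for a b
    using that c_out by (auto simp: contract_vertex_def)
  have "nbrs EB v = {contract_vertex A c x1, contract_vertex A c x2, contract_vertex A c x3}"
    using nbrs_contraction[OF contr simple simple_contr v_rest] at_most_one
    unfolding nbrs_v contract_vertex_def by auto
  moreover have "v1 \<notin> VB - {v}" "v2 \<notin> VB - {v}" "v3 \<notin> VB - {v}"
    using new_fresh c_not_new unfolding VB by auto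
  ultimately show ?thesis
    unfolding tri_data_def using v_rest VB new_distinct ne x_V x_distinct at_most_one by blast
qed

context
  assumes tdB: "tri_data VB EB v v1 v2 v3 (contract_vertex A c x1) (contract_vertex A c x2) (contract_vertex A c x3)"
begin

interpretation B: triangle_replacement VB EB v v1 v2 v3
  "contract_vertex A c x1" "contract_vertex A c x2" "contract_vertex A c x3"
  using simple_contr tdB by unfold_locales

lemma adj_expanded_contraction_old:
  assumes "a \<in> V' - A" "b \<in> V' - A" shows "{a, b} \<in> B.E' \<longleftrightarrow> {a, b} \<in> E'"
proof -
  have VB: "VB = insert c (V - A)" and c_out: "c \<notin> V - A"
    and old: "\<forall>a\<in>V - A. \<forall>b\<in>V - A. {a, b} \<in> EB \<longleftrightarrow> {a, b} \<in> E"
    using contr unfolding contraction_def by blast+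
  have ab: "a \<notin> A" "a \<noteq> c" "b \<notin> A" "b \<noteq> c"
    using assms c_out c_not_new vertices_expanded_diff[OF A_old] by auto
  have y_eq: "z = contract_vertex A c x \<longleftrightarrow> z = x" "contract_vertex A c x = z \<longleftrightarrow> x = z"
    if "z \<notin> A" "z \<noteq> c" for z x
    using that by (auto simp: contract_vertex_def)
  have "x \<in> VB - {v} \<longleftrightarrow> x \<in> V - {v}" if "x \<notin> A" "x \<noteq> c" for x
    using that VB by auto
  with ab have "({a, b} \<in> EB \<and> a \<in> VB - {v} \<and> b \<in> VB - {v}) \<longleftrightarrow>
      ({a, b} \<in> E \<and> a \<in> V - {v} \<and> b \<in> V - {v})"
    using old by blast
  then show ?thesis
    unfolding B.edge_expanded_iff edge_expanded_iff by (simp add: y_eq[OF ab(1,2)] y_eq[OF ab(3,4)])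
qed

lemma adj_expanded_contraction_centre:
  assumes d: "d \<in> V' - A" shows "{c, d} \<in> B.E' \<longleftrightarrow> (\<exists>t\<in>A. {t, d} \<in> E')"
proof -
  have VB: "VB = insert c (V - A)" and c_out: "c \<notin> V - A"
    and new: "\<forall>d\<in>V - A. {c, d} \<in> EB \<longleftrightarrow> (\<exists>t\<in>A. {t, d} \<in> E)"
    using contr unfolding contraction_def by blast+
  have c_rest: "c \<in> VB - {v}" using VB c_out v_in A_old by blast
  consider "d \<in> V - {v} - A" | "d \<in> {v1, v2, v3}" using d vertices_expanded_diff[OF A_old] by blast
  then show ?thesis
  proof cases
    case 1
    then have "d \<in> VB - {v}" using VB by blast
    then have "{c, d} \<in> B.E' \<longleftrightarrow> {c, d} \<in> EB" using B.adj_expanded_old_iff c_rest by blast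
    also have "\<dots> \<longleftrightarrow> (\<exists>t\<in>A. {t, d} \<in> E)" using new 1 by blast
    also have "\<dots> \<longleftrightarrow> (\<exists>t\<in>A. {t, d} \<in> E')" using adj_expanded_old_iff 1 A_old by blast
    finally show ?thesis .
  next
    case 2
    have d_out: "d \<notin> VB - {v}" "d \<notin> V - {v}" using 2 VB new_fresh c_not_new by auto
    have "{c, d} \<in> B.E' \<longleftrightarrow> {d, c} \<in> B.E'" by (rule B.edge_expanded_sym)
    also have "\<dots> \<longleftrightarrow> (d = v1 \<and> x1 \<in> A) \<or> (d = v2 \<and> x2 \<in> A) \<or> (d = v3 \<and> x3 \<in> A)"
      unfolding B.adj_expanded_old_vertex_iff[OF c_rest]
      using d_out simple_graph_edgeD[OF simple_contr, of d c] x_in c_out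
      by (auto simp: contract_vertex_def)
    also have "\<dots> \<longleftrightarrow> (\<exists>t\<in>A. {d, t} \<in> E')"
    proof -
      have "{d, t} \<in> E' \<longleftrightarrow> (d = v1 \<and> t = x1) \<or> (d = v2 \<and> t = x2) \<or> (d = v3 \<and> t = x3)"
        if "t \<in> A" for t
        using adj_expanded_old_vertex_iff[of t d] that A_old d_out simple_graph_edgeD[OF simple, of d t]
        by blast
      then show ?thesis by blast
    qed
    also have "\<dots> \<longleftrightarrow> (\<exists>t\<in>A. {t, d} \<in> E')" using edge_expanded_sym by blast
    finally show ?thesis .
  qed
qed

lemma contraction_expanded_commute: "contraction V' E' A c (tri_vertices VB v v1 v2 v3) B.E'"
proof -
  have VB: "VB = insert c (V - A)" and c_out: "c \<notin> V - A"
    using contr unfolding contraction_def by blast+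
  have "tri_vertices VB v v1 v2 v3 = insert c (V' - A)"
    using B.vertices_expanded vertices_expanded_diff[OF A_old] VB c_out v_in A_old by auto
  moreover have "A \<subseteq> V'" using A_old vertices_expanded by blast
  moreover have "c \<notin> V' - A" using vertices_expanded_diff[OF A_old] c_out c_not_new by blast
  ultimately show ?thesis unfolding contraction_def
    using adj_expanded_contraction_old adj_expanded_contraction_centre by blast
qed

end

end

lemma klee_contraction_old_triangle:
  assumes kG: "klee (insert c0 (V - T)) (contract_edges E T c0)" and c0: "c0 \<in> T"
    and T: "T \<subseteq> V - {v}" "triangle E T" and df: "diamond_free E"
    and C: "contraction V' E' T c VB EB" and sB: "simple_graph VB EB"
  shows "klee VB EB"
proof -
  let ?VG = "insert c0 (V - T)" and ?EG = "contract_edges E T c0"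
  have CG: "contraction V E T c0 ?VG ?EG"
    by (rule contraction_contract_edges[OF _ c0]) (use T(1) in blast)
  have sG: "simple_graph ?VG ?EG" by (rule simple_graph_contract_edges[OF simple c0])
  have "a = b" if "a \<in> T" "b \<in> T" "a \<in> {x1, x2, x3}" "b \<in> {x1, x2, x3}" for a b
  proof (rule diamond_free_triangle_unique_nbr[OF df T(2) that(1,2)])
    show "v \<notin> T" using T(1) by blast
    show "{a, v} \<in> E" "{b, v} \<in> E" using adj_v_iff that(3,4) by blast+
  qed
  then have at_most_one: "\<not> (x1 \<in> T \<and> x2 \<in> T)" "\<not> (x1 \<in> T \<and> x3 \<in> T)" "\<not> (x2 \<in> T \<and> x3 \<in> T)"
    using x_distinct by blast+
  have c0_out: "c0 \<notin> {v1, v2, v3}" using c0 T(1) new_fresh by blast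
  let ?y = "contract_vertex T c0"
  have tdG: "tri_data ?VG ?EG v v1 v2 v3 (?y x1) (?y x2) (?y x3)"
    by (rule tri_data_contraction[OF CG sG T(1) c0_out at_most_one])
  let ?WV = "tri_vertices ?VG v v1 v2 v3" and ?WE = "tri_edges ?EG v v1 v2 v3 (?y x1) (?y x2) (?y x3)"
  have sW: "simple_graph ?WV ?WE"
    by (rule triangle_replacement.simple_graph_expanded[OF triangle_replacement.intro[OF sG tdG]])
  have "graph_iso ?WV ?WE VB EB"
    by (rule contractions_graph_iso[OF contraction_expanded_commute[OF CG sG T(1) c0_out tdG] C sW sB])
  then show ?thesis using klee.iso[OF klee.step[OF kG tdG] sB] by blast
qed

lemma klee_contraction_expanded_K4:
  assumes "cubic V E" "card V = 4" "triangle E' T" "contraction V' E' T c VB EB" "simple_graph VB EB"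
  shows "klee VB EB"
proof -
  have "card VB = 4"
    using card_contraction[OF assms(4) simple_graph_finite[OF simple_graph_expanded]] card_expanded assms(2,3)
    by (simp add: triangle_def)
  moreover have "cubic VB EB"
    using cubic_contraction[OF cubic_expanded[OF assms(1)] diamond_free_expanded assms(3-5)] assms(2) by blast
  ultimately have "is_K4 VB EB" using cubic_card_4_is_K4 by blast
  then show ?thesis by (rule klee.K4)
qed

end

subsection \<open>Contracting triangles of Klee graphs\<close>

lemma klee_cubic_diamond_free: "klee V E \<Longrightarrow> cubic V E \<and> (card V = 4 \<or> diamond_free E)"
proof (induction rule: klee.induct)
  case (K4 V E)
  then show ?case using K4_cubic[OF K4.hyps] by (simp add: is_K4_def)
next
  case (step V E w v1 v2 v3 x1 x2 x3)
  then interpret triangle_replacement V E w v1 v2 v3 x1 x2 x3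
    by unfold_locales (simp_all add: cubic_def)
  show ?case using cubic_expanded diamond_free_expanded step.IH by blast
next
  case (iso V E V' E')
  then show ?case using cubic_graph_iso diamond_free_graph_iso graph_iso_card by metis
qed

lemma contraction_along_graph_iso:
  assumes iso: "graph_iso V E V2 E2" and s: "simple_graph V E" "simple_graph V2 E2"
    and tri: "triangle E2 T" and C: "contraction V2 E2 T c VB EB" and sB: "simple_graph VB EB"
  obtains T0 c0 where "triangle E T0" "c0 \<in> T0" "card (insert c0 (V - T0)) = card VB"
    "graph_iso (insert c0 (V - T0)) (contract_edges E T0 c0) VB EB"
proof -
  obtain g where g: "bij_betw g V2 V" and adj: "\<forall>a\<in>V2. \<forall>b\<in>V2. {a, b} \<in> E2 \<longleftrightarrow> {g a, g b} \<in> E"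
    using graph_iso_sym[OF iso] unfolding graph_iso_def by blast
  have T: "T \<subseteq> V2" using C unfolding contraction_def by blast
  have tri0: "triangle E (g ` T)" by (rule triangle_graph_iso[OF g adj T tri])
  then have "g ` T \<noteq> {}" unfolding triangle_def by auto
  then obtain c0 where c0: "c0 \<in> g ` T" by blast
  let ?VG = "insert c0 (V - g ` T)" and ?EG = "contract_edges E (g ` T) c0"
  have CG: "contraction V E (g ` T) c0 ?VG ?EG"
    by (rule contraction_contract_edges[OF _ c0]) (use bij_betw_imp_surj_on[OF g] T in blast)
  have sG: "simple_graph ?VG ?EG" by (rule simple_graph_contract_edges[OF s(1) c0])
  have "card ?VG = card VB"
    using card_contraction[OF CG simple_graph_finite[OF s(1)]] card_contraction[OF C simple_graph_finite[OF s(2)]]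
      graph_iso_card[OF iso] tri0 tri by (simp add: triangle_def)
  moreover have "graph_iso ?VG ?EG VB EB"
    using contraction_graph_iso[OF g adj C CG sB sG] graph_iso_sym by blast
  ultimately show ?thesis using that tri0 c0 by blast
qed

lemma klee_contraction:
  assumes "klee VK EK" "triangle EK T" "contraction VK EK T c VB EB" "simple_graph VB EB" "4 \<le> card VB"
  shows "klee VB EB"
  using assms
proof (induction arbitrary: T c VB EB rule: klee.induct)
  case (K4 V E)
  then have "card V = 4" "card T = 3" by (simp_all add: is_K4_def triangle_def)
  moreover have "finite V" using \<open>card V = 4\<close> by (metis card.infinite zero_neq_numeral)
  ultimately have "card VB = 2" using card_contraction[OF K4.prems(2)] by simp
  then show ?case using K4.prems(4) by simp
next
  case (step V E w v1 v2 v3 x1 x2 x3)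
  have inv: "cubic V E" "card V = 4 \<or> diamond_free E"
    using klee_cubic_diamond_free[OF step.hyps(1)] by blast+
  interpret H: triangle_replacement V E w v1 v2 v3 x1 x2 x3
    using inv(1) step.hyps(2) by unfold_locales (simp add: cubic_def)
  consider (new) "T = {v1, v2, v3}" | (old) "T \<subseteq> V - {w}" "triangle E T"
    using H.triangle_expanded_cases[OF step.prems(1)] by blast
  then show ?case
  proof cases
    case new
    have "graph_iso V E VB EB"
      by (rule contractions_graph_iso[OF H.contraction_expanded step.prems(2)[unfolded new] H.simple step.prems(3)])
    then show ?thesis using klee.iso[OF step.hyps(1) step.prems(3)] by blast
  next
    case old
    show ?thesis
    proof (cases "card V = 4")
      case True
      then show ?thesis by (rule H.klee_contraction_expanded_K4[OF inv(1) _ step.prems(1-3)])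
    next
      case False
      then have df: "diamond_free E" using inv(2) by blast
      have "T \<noteq> {}" using old(2) unfolding triangle_def by auto
      then obtain c0 where c0: "c0 \<in> T" by blast
      have CG: "contraction V E T c0 (insert c0 (V - T)) (contract_edges E T c0)"
        by (rule contraction_contract_edges[OF _ c0]) (use old(1) in blast)
      have "4 \<le> card (insert c0 (V - T))"
        using card_contraction[OF CG simple_graph_finite[OF H.simple]] old(2)
          card_ge_6_if_triangle[OF inv(1) df old(2)] by (simp add: triangle_def)
      then have "klee (insert c0 (V - T)) (contract_edges E T c0)"
        using step.IH[OF old(2) CG simple_graph_contract_edges[OF H.simple c0]] by blast
      then show ?thesis by (rule H.klee_contraction_old_triangle[OF _ c0 old df step.prems(2,3)])
    qed
  qed
next
  case (iso V E V2 E2)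
  have sV: "simple_graph V E" using klee_cubic_diamond_free[OF iso.hyps(1)] by (simp add: cubic_def)
  obtain T0 c0 where T0: "triangle E T0" "c0 \<in> T0" "card (insert c0 (V - T0)) = card VB"
    and iso0: "graph_iso (insert c0 (V - T0)) (contract_edges E T0 c0) VB EB"
    by (rule contraction_along_graph_iso[OF iso.hyps(3) sV iso.hyps(2) iso.prems(1-3)])
  have "contraction V E T0 c0 (insert c0 (V - T0)) (contract_edges E T0 c0)"
    by (rule contraction_contract_edges[OF triangle_subset[OF sV T0(1)] T0(2)])
  then have "klee (insert c0 (V - T0)) (contract_edges E T0 c0)"
    using iso.IH[OF T0(1) _ simple_graph_contract_edges[OF sV T0(2)]] T0(3) iso.prems(4) by simp
  then show ?case using klee.iso[OF _ iso.prems(3) iso0] by blast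
qed

theorem mainTheorem4:
  fixes V :: "'a set" and E :: "'a set set" and v v1 v2 v3 x1 x2 x3 :: 'a
  assumes "cubic V E"
    and "card V \<ge> 4"
    and "tri_data V E v v1 v2 v3 x1 x2 x3"
    and "klee (tri_vertices V v v1 v2 v3) (tri_edges E v v1 v2 v3 x1 x2 x3)"
  shows "klee V E"
proof -
  interpret triangle_replacement V E v v1 v2 v3 x1 x2 x3
    using assms(1,3) by unfold_locales (simp add: cubic_def)
  show ?thesis by (rule klee_contraction[OF assms(4) triangle_new contraction_expanded simple assms(2)])
qed

end
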